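(* Let $q>0$ with $q\neq1$, let $y:\mathbb{R}\to\mathbb{R}^2$ be a $2\pi$-periodic $C^2$ map, and let $\eta\in\mathbb{S}^1$. Define $\psi_\eta(\theta,\theta_\xi)=(\sqrt{q}\,\eta+\xi)\cdot y(\theta)$ and $\Psi_\eta(\theta,\theta_\xi)=-(\sqrt{q}\,\eta-\xi)\cdot y'(\theta)^\perp$, where $\xi=(\cos\theta_\xi,\sin\theta_\xi)^T$. If $(\theta,\theta_\xi)$ satisfies $\partial\psi_\eta/\partial\theta(\theta,\theta_\xi)=(\sqrt{q}\,\eta+\xi)\cdot y'(\theta)=0$, then $\Psi_\eta(\theta,\theta_\xi)=0$ if and only if $y'(\theta)=0$.
   Context: For $x=(x_1,x_2)^T\in\mathbb{R}^2$, $x^\perp=(-x_2,x_1)^T$. *)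

theory Defs
  imports "HOL-Analysis.Analysis"
begin

definition perp :: "real^2 \<Rightarrow> real^2" where
  "perp x = vector [- (x $ 2), x $ 1]"

definition unitvec :: "real \<Rightarrow> real^2" where
  "unitvec t = vector [cos t, sin t]"

definition psi_eta :: "real \<Rightarrow> (real \<Rightarrow> real^2) \<Rightarrow> real^2 \<Rightarrow> real \<Rightarrow> real \<Rightarrow> real" where
  "psi_eta q y \<eta> \<theta> \<theta>\<xi> = (sqrt q *\<^sub>R \<eta> + unitvec \<theta>\<xi>) \<bullet> y \<theta>"

definition Psi_eta :: "real \<Rightarrow> (real \<Rightarrow> real^2) \<Rightarrow> real^2 \<Rightarrow> real \<Rightarrow> real \<Rightarrow> real" where
  "Psi_eta q y \<eta> \<theta> \<theta>\<xi> = - ((sqrt q *\<^sub>R \<eta> - unitvec \<theta>\<xi>) \<bullet> perp (vector_derivative y (at \<theta>)))"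

end

theory Submission
  imports Defs
begin

text \<open>Write \<open>v = y'(\<theta>)\<close>, \<open>a = \<surd>q \<eta> + \<xi>\<close> and \<open>b = \<surd>q \<eta> - \<xi>\<close>.
  The critical point condition says \<open>a \<bullet> v = 0\<close>, and \<open>\<Psi>\<^sub>\<eta> = 0\<close> says
  \<open>b \<bullet> v\<^sup>\<perp> = 0\<close>. In the plane, \<open>(a \<bullet> v)(b \<bullet> v) + (a \<bullet> v\<^sup>\<perp>)(b \<bullet> v\<^sup>\<perp>) = (a \<bullet> b) |v|\<^sup>2\<close>,
  because \<open>v, v\<^sup>\<perp>\<close> is an orthogonal pair of vectors of length \<open>|v|\<close>; and
  \<open>a \<bullet> b = q |\<eta>|\<^sup>2 - |\<xi>|\<^sup>2 = q - 1 \<noteq> 0\<close>. Hence \<open>|v| = 0\<close>.\<close>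

lemma perp_zero [simp]: "perp 0 = 0"
  by (simp add: perp_def vec_eq_iff forall_2)

lemma norm_unitvec [simp]: "norm (unitvec t) = 1"
  by (simp add: unitvec_def norm_eq_sqrt_inner inner_vec_def sum_2 power2_eq_square [symmetric])

lemma inner_mult_inner_add_perp:
  fixes u v w :: "real^2"
  shows "(u \<bullet> v) * (w \<bullet> v) + (u \<bullet> perp v) * (w \<bullet> perp v) = (u \<bullet> w) * (v \<bullet> v)"
  by (simp add: perp_def inner_vec_def sum_2 algebra_simps)

lemma eq_zero_if_inner_zero_inner_perp_zero:
  fixes u v w :: "real^2"
  assumes "u \<bullet> w \<noteq> 0" and "u \<bullet> v = 0" and "w \<bullet> perp v = 0"
  shows "v = 0"
proof -
  have "(u \<bullet> w) * (v \<bullet> v) = 0"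
    using assms(2,3) inner_mult_inner_add_perp[of u v w] by simp
  with assms(1) show ?thesis
    by simp
qed

lemma inner_add_diff_scaleR_unit:
  fixes x z :: "'a::real_inner"
  assumes "norm x = 1" and "norm z = 1"
  shows "(r *\<^sub>R x + z) \<bullet> (r *\<^sub>R x - z) = r\<^sup>2 - 1"
  using assms by (simp add: algebra_simps inner_commute power2_eq_square norm_eq_1)

lemma inner_has_real_derivative:
  assumes "(y has_vector_derivative v) (at t)"
  shows "((\<lambda>s. a \<bullet> y s) has_real_derivative a \<bullet> v) (at t)"
  using assms unfolding has_vector_derivative_def has_field_derivative_def
  by (auto intro!: derivative_eq_intros simp: mult.commute)

theorem lemma1:
  fixes q :: real and y y' y'' :: "real \<Rightarrow> real^2" and \<eta> :: "real^2"
    and \<theta> \<theta>\<xi> :: real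
  assumes q_pos: "q > 0" and q_ne1: "q \<noteq> 1"
    and periodic: "\<And>t. y (t + 2 * pi) = y t"
    and deriv1: "\<And>t. (y has_vector_derivative y' t) (at t)"
    and deriv2: "\<And>t. (y' has_vector_derivative y'' t) (at t)"
    and cont2: "continuous_on UNIV y''"
    and eta_unit: "norm \<eta> = 1"
    and crit: "((\<lambda>t. psi_eta q y \<eta> t \<theta>\<xi>) has_real_derivative 0) (at \<theta>)"
  shows "Psi_eta q y \<eta> \<theta> \<theta>\<xi> = 0 \<longleftrightarrow> y' \<theta> = 0"
proof -
  define a where "a = sqrt q *\<^sub>R \<eta> + unitvec \<theta>\<xi>"
  define b where "b = sqrt q *\<^sub>R \<eta> - unitvec \<theta>\<xi>"
  have "((\<lambda>t. psi_eta q y \<eta> t \<theta>\<xi>) has_real_derivative a \<bullet> y' \<theta>) (at \<theta>)"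
    unfolding psi_eta_def a_def by (rule inner_has_real_derivative [OF deriv1])
  then have a_orth: "a \<bullet> y' \<theta> = 0"
    using crit DERIV_unique by blast
  have Psi_eq: "Psi_eta q y \<eta> \<theta> \<theta>\<xi> = - (b \<bullet> perp (y' \<theta>))"
    by (simp add: Psi_eta_def b_def vector_derivative_at [OF deriv1])
  have "a \<bullet> b = q - 1"
    using inner_add_diff_scaleR_unit [OF eta_unit norm_unitvec] q_pos
    by (simp add: a_def b_def)
  then have "a \<bullet> b \<noteq> 0"
    using q_ne1 by simp
  then show ?thesis
    using eq_zero_if_inner_zero_inner_perp_zero [OF _ a_orth] by (auto simp: Psi_eq)
qed

end
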